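(* Let $(M,d)$ be a compact metric space, $\varphi:M\to M$ continuous, $\mathcal G=\{G_n\}\in\mathcal A(M)$, and $\mathbb P\in\mathcal P(M)$ with $\mathrm{supp}(\mathbb P)=M$. Assume that for every $\epsilon>0$ there are $K_n(\epsilon)\ge1$ with $\lim_{\epsilon\downarrow0}\limsup_nn^{-1}\log K_n(\epsilon)=0$ such that for every $n\ge1$ the inequalities $$K_n(\epsilon)^{-1}e^{G_n(x)-n\mathfrak p_\varphi(\mathcal G)}\le\mathbb P(B_n(x,\epsilon))\le K_n(\epsilon)e^{G_n(x)-n\mathfrak p_\varphi(\mathcal G)}$$ hold for $\mathbb P$-almost every $x\in M$. Then $\mathbb P$ is a weak Gibbs measure for $\mathcal G$.
   Context: $C(M),B(M)$: continuous/bounded Borel real functions, sup norm; $S_nG=\sum_{k<n}G\circ\varphi^k$; $B_n(x,\epsilon)=\{y:d(\varphi^ky,\varphi^kx)<\epsilon,0\le k<n\}$. $\mathcal A(M)$: $\{G_n\}\subset B(M)$ with some $\{G^{(k)}\}\subset C(M)$ satisfying $\lim_k\limsup_nn^{-1}\|G_n-S_nG^{(k)}\|_\infty=0$. Pressure $\mathfrak p_\varphi(\mathcal G)=\lim_{\epsilon\downarrow0}\limsup_nn^{-1}\log\inf\{\sum_{x\in E}e^{G_n(x)}:E\text{ finite},\bigcup_{x\in E}B_n(x,\epsilon)=M\}$. Weak Gibbs measure for $\mathcal G$: $\mathbb P\in\mathcal P(M)$ such that for every $n\ge1$, $\epsilon>0$ there is $K_n(\epsilon)\ge1$ with the two-sided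 bound above holding for every $x\in M$, and $\lim_{\epsilon\downarrow0}\limsup_nn^{-1}\log K_n(\epsilon)=0$. *)

theory Defs
  imports "HOL-Probability.Probability"
begin

definition birkhoff_sum :: "('a \<Rightarrow> 'a) \<Rightarrow> nat \<Rightarrow> ('a \<Rightarrow> real) \<Rightarrow> 'a \<Rightarrow> real" where
  "birkhoff_sum \<phi> n G x = (\<Sum>k<n. G ((\<phi> ^^ k) x))"

definition sup_norm :: "('a \<Rightarrow> real) \<Rightarrow> real" where
  "sup_norm f = (SUP x. \<bar>f x\<bar>)"

definition bowen_ball :: "('a::metric_space \<Rightarrow> 'a) \<Rightarrow> nat \<Rightarrow> 'a \<Rightarrow> real \<Rightarrow> 'a set" where
  "bowen_ball \<phi> n x \<epsilon> = {y. \<forall>k<n. dist ((\<phi> ^^ k) y) ((\<phi> ^^ k) x) < \<epsilon>}"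

definition asymp_additive :: "('a::metric_space \<Rightarrow> 'a) \<Rightarrow> (nat \<Rightarrow> 'a \<Rightarrow> real) \<Rightarrow> bool" where
  "asymp_additive \<phi> G \<longleftrightarrow>
     (\<forall>n. G n \<in> borel_measurable borel \<and> bounded (range (G n))) \<and>
     (\<exists>Gk :: nat \<Rightarrow> 'a \<Rightarrow> real.
        (\<forall>k. continuous_on UNIV (Gk k)) \<and>
        ((\<lambda>k. limsup (\<lambda>n. ereal (sup_norm (\<lambda>x. G n x - birkhoff_sum \<phi> n (Gk k) x) / real n)))
           \<longlonglongrightarrow> 0))"

definition pressure_ereal :: "('a::metric_space \<Rightarrow> 'a) \<Rightarrow> (nat \<Rightarrow> 'a \<Rightarrow> real) \<Rightarrow> ereal" where
  "pressure_ereal \<phi> G =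
     Lim (at_right (0::real))
       (\<lambda>\<epsilon>. limsup (\<lambda>n. ereal (ln (Inf {(\<Sum>x\<in>E. exp (G n x)) | E.
                  finite E \<and> (\<Union>x\<in>E. bowen_ball \<phi> n x \<epsilon>) = UNIV}) / real n)))"

definition pressure :: "('a::metric_space \<Rightarrow> 'a) \<Rightarrow> (nat \<Rightarrow> 'a \<Rightarrow> real) \<Rightarrow> real" where
  "pressure \<phi> G = real_of_ereal (pressure_ereal \<phi> G)"

definition measure_support :: "'a::topological_space measure \<Rightarrow> 'a set" where
  "measure_support P = {x. \<forall>U. open U \<and> x \<in> U \<longrightarrow> emeasure P U > 0}"

definition weak_gibbs :: "('a::metric_space \<Rightarrow> 'a) \<Rightarrow> (nat \<Rightarrow> 'a \<Rightarrow> real) \<Rightarrow> 'a measure \<Rightarrow> bool" where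
  "weak_gibbs \<phi> G P \<longleftrightarrow>
     prob_space P \<and> sets P = sets borel \<and>
     (\<exists>K :: nat \<Rightarrow> real \<Rightarrow> real.
        (\<forall>n \<epsilon>. n \<ge> 1 \<and> \<epsilon> > 0 \<longrightarrow> K n \<epsilon> \<ge> 1 \<and>
           (\<forall>x. exp (G n x - real n * pressure \<phi> G) / K n \<epsilon> \<le> measure P (bowen_ball \<phi> n x \<epsilon>) \<and>
                measure P (bowen_ball \<phi> n x \<epsilon>) \<le> K n \<epsilon> * exp (G n x - real n * pressure \<phi> G))) \<and>
        ((\<lambda>\<epsilon>. limsup (\<lambda>n. ereal (ln (K n \<epsilon>) / real n))) \<longlongrightarrow> 0) (at_right 0))"

end

theory Submission
  imports Defs
begin

text \<open>Since \<open>P\<close> has full support, every Bowen ball \<open>B\<^sub>n(x, \<epsilon>/2)\<close> has positive measure and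
  therefore contains a point \<open>y\<close> at which the Gibbs bounds hold at the radii \<open>\<epsilon>/2\<close> and \<open>2\<epsilon>\<close>.
  The inclusions \<open>B\<^sub>n(y, \<epsilon>/2) \<subseteq> B\<^sub>n(x, \<epsilon>) \<subseteq> B\<^sub>n(y, 2\<epsilon>)\<close> transfer these bounds to \<open>x\<close>, at the
  price of a factor \<open>exp D\<^sub>n(\<epsilon>/2)\<close>, where \<open>D\<^sub>n(\<epsilon>)\<close> is the variation of \<open>G\<^sub>n\<close> over Bowen balls
  of radius \<open>\<epsilon>\<close>.
  This variation grows subexponentially as \<open>\<epsilon> \<rightarrow> 0\<close>: up to \<open>o(n)\<close> the function \<open>G\<^sub>n\<close> is a
  Birkhoff sum of a uniformly continuous function, whose variation over \<open>B\<^sub>n(x, \<epsilon>)\<close> is at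
  most \<open>n\<close> times its modulus of continuity at \<open>\<epsilon>\<close>.\<close>

lemma continuous_on_funpow:
  fixes \<phi> :: "'a::topological_space \<Rightarrow> 'a"
  assumes "continuous_on UNIV \<phi>"
  shows "continuous_on UNIV (\<phi> ^^ k)"
proof (induction k)
  case (Suc k)
  then show ?case
    using continuous_on_compose[of UNIV "\<phi> ^^ k" \<phi>] assms by (simp add: continuous_on_subset)
qed (simp add: continuous_on_id)

lemma open_bowen_ball:
  assumes "continuous_on UNIV \<phi>"
  shows "open (bowen_ball \<phi> n x \<epsilon>)"
proof -
  have "bowen_ball \<phi> n x \<epsilon> = (\<Inter>k<n. {y. dist ((\<phi> ^^ k) y) ((\<phi> ^^ k) x) < \<epsilon>})"
    by (auto simp: bowen_ball_def)
  moreover have "open {y. dist ((\<phi> ^^ k) y) ((\<phi> ^^ k) x) < \<epsilon>}" for k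
    by (rule open_Collect_less) (auto intro!: continuous_intros continuous_on_funpow[OF assms])
  ultimately show ?thesis by auto
qed

lemma centre_in_bowen_ball: "\<epsilon> > 0 \<Longrightarrow> x \<in> bowen_ball \<phi> n x \<epsilon>"
  by (simp add: bowen_ball_def)

lemma bowen_ball_commute: "y \<in> bowen_ball \<phi> n x \<epsilon> \<longleftrightarrow> x \<in> bowen_ball \<phi> n y \<epsilon>"
  by (simp add: bowen_ball_def dist_commute)

lemma bowen_ball_mono: "\<epsilon> \<le> \<delta> \<Longrightarrow> bowen_ball \<phi> n x \<epsilon> \<subseteq> bowen_ball \<phi> n x \<delta>"
  by (auto simp: bowen_ball_def)

lemma bowen_ball_triangle:
  assumes "y \<in> bowen_ball \<phi> n x \<delta>"
  shows "bowen_ball \<phi> n y \<epsilon> \<subseteq> bowen_ball \<phi> n x (\<epsilon> + \<delta>)"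
proof
  fix z assume z: "z \<in> bowen_ball \<phi> n y \<epsilon>"
  show "z \<in> bowen_ball \<phi> n x (\<epsilon> + \<delta>)" unfolding bowen_ball_def
  proof safe
    fix k assume "k < n"
    then have "dist ((\<phi> ^^ k) z) ((\<phi> ^^ k) y) < \<epsilon>" "dist ((\<phi> ^^ k) y) ((\<phi> ^^ k) x) < \<delta>"
      using z assms by (auto simp: bowen_ball_def)
    then show "dist ((\<phi> ^^ k) z) ((\<phi> ^^ k) x) < \<epsilon> + \<delta>"
      using dist_triangle[of "(\<phi> ^^ k) z" "(\<phi> ^^ k) x" "(\<phi> ^^ k) y"] by linarith
  qed
qed

lemma bounded_range_birkhoff_sum:
  fixes g :: "'a \<Rightarrow> real"
  assumes "bounded (range g)"
  shows "bounded (range (birkhoff_sum \<phi> n g))"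
proof -
  obtain B where B: "\<And>a. \<bar>g a\<bar> \<le> B" using assms by (auto simp: bounded_iff)
  have "\<bar>birkhoff_sum \<phi> n g x\<bar> \<le> real n * B" for x
  proof -
    have "\<bar>birkhoff_sum \<phi> n g x\<bar> \<le> (\<Sum>k<n. \<bar>g ((\<phi> ^^ k) x)\<bar>)"
      unfolding birkhoff_sum_def by (rule sum_abs)
    also have "\<dots> \<le> (\<Sum>k<n. B)" by (rule sum_mono) (use B in auto)
    finally show ?thesis by simp
  qed
  then show ?thesis by (auto simp: bounded_iff)
qed

lemma birkhoff_sum_diff_le_on_bowen_ball:
  fixes g :: "'a::metric_space \<Rightarrow> real"
  assumes "\<And>a b. dist a b < \<epsilon> \<Longrightarrow> \<bar>g a - g b\<bar> \<le> \<eta>" and "y \<in> bowen_ball \<phi> n x \<epsilon>"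
  shows "\<bar>birkhoff_sum \<phi> n g x - birkhoff_sum \<phi> n g y\<bar> \<le> real n * \<eta>"
proof -
  have "\<bar>birkhoff_sum \<phi> n g x - birkhoff_sum \<phi> n g y\<bar>
        = \<bar>\<Sum>k<n. g ((\<phi> ^^ k) y) - g ((\<phi> ^^ k) x)\<bar>"
    unfolding birkhoff_sum_def by (simp add: sum_subtractf abs_minus_commute)
  also have "\<dots> \<le> (\<Sum>k<n. \<bar>g ((\<phi> ^^ k) y) - g ((\<phi> ^^ k) x)\<bar>)" by (rule sum_abs)
  also have "\<dots> \<le> (\<Sum>k<n. \<eta>)"
    by (rule sum_mono, rule assms(1)) (use assms(2) in \<open>auto simp: bowen_ball_def\<close>)
  finally show ?thesis by simp
qed

lemma abs_le_sup_norm: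
  fixes f :: "'a \<Rightarrow> real"
  assumes "bounded (range f)"
  shows "\<bar>f x\<bar> \<le> sup_norm f"
  unfolding sup_norm_def
  by (rule cSup_upper) (use assms in \<open>auto simp: bounded_iff bdd_above_def\<close>)

definition bowen_variation :: "('a::metric_space \<Rightarrow> 'a) \<Rightarrow> nat \<Rightarrow> ('a \<Rightarrow> real) \<Rightarrow> real \<Rightarrow> real" where
  "bowen_variation \<phi> n f \<epsilon> = Sup {\<bar>f x - f y\<bar> | x y. y \<in> bowen_ball \<phi> n x \<epsilon>}"

lemma abs_diff_le_bowen_variation:
  fixes f :: "'a::metric_space \<Rightarrow> real"
  assumes "bounded (range f)" and "y \<in> bowen_ball \<phi> n x \<epsilon>"
  shows "\<bar>f x - f y\<bar> \<le> bowen_variation \<phi> n f \<epsilon>"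
  unfolding bowen_variation_def
proof (rule cSup_upper)
  obtain B where B: "\<And>a. \<bar>f a\<bar> \<le> B" using assms(1) by (auto simp: bounded_iff)
  show "bdd_above {\<bar>f x - f y\<bar> | x y. y \<in> bowen_ball \<phi> n x \<epsilon>}"
  proof (rule bdd_aboveI)
    fix z assume "z \<in> {\<bar>f x - f y\<bar> | x y. y \<in> bowen_ball \<phi> n x \<epsilon>}"
    then obtain a b where "z = \<bar>f a - f b\<bar>" by auto
    then show "z \<le> 2 * B" using B[of a] B[of b] by linarith
  qed
qed (use assms(2) in auto)

lemma bowen_variation_nonneg:
  fixes f :: "'a::metric_space \<Rightarrow> real"
  assumes "bounded (range f)" and "\<epsilon> > 0"
  shows "0 \<le> bowen_variation \<phi> n f \<epsilon>"
  using abs_diff_le_bowen_variation[OF assms(1) centre_in_bowen_ball[OF assms(2)]] by simp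

lemma bowen_variation_le:
  fixes f :: "'a::metric_space \<Rightarrow> real"
  assumes "\<epsilon> > 0" and "\<And>x y. y \<in> bowen_ball \<phi> n x \<epsilon> \<Longrightarrow> \<bar>f x - f y\<bar> \<le> c"
  shows "bowen_variation \<phi> n f \<epsilon> \<le> c"
  unfolding bowen_variation_def
  by (rule cSup_least) (use assms centre_in_bowen_ball in blast)+

lemma bowen_variation_le_birkhoff_approx:
  fixes f g :: "'a::metric_space \<Rightarrow> real"
  assumes "\<epsilon> > 0" and f: "bounded (range f)" and g: "bounded (range g)"
    and modulus: "\<And>a b. dist a b < \<epsilon> \<Longrightarrow> \<bar>g a - g b\<bar> \<le> \<eta>"
  shows "bowen_variation \<phi> n f \<epsilon> \<le> 2 * sup_norm (\<lambda>x. f x - birkhoff_sum \<phi> n g x) + real n * \<eta>"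
proof (rule bowen_variation_le[OF \<open>\<epsilon> > 0\<close>])
  let ?S = "birkhoff_sum \<phi> n g"
  have "bounded (range (\<lambda>x. f x - ?S x))"
    by (intro bounded_minus_comp f bounded_range_birkhoff_sum g)
  then have close: "\<bar>f x - ?S x\<bar> \<le> sup_norm (\<lambda>x. f x - ?S x)" for x
    by (rule abs_le_sup_norm)
  fix x y assume "y \<in> bowen_ball \<phi> n x \<epsilon>"
  from birkhoff_sum_diff_le_on_bowen_ball[where g = g, OF modulus this] close[of x] close[of y]
  show "\<bar>f x - f y\<bar> \<le> 2 * sup_norm (\<lambda>x. f x - ?S x) + real n * \<eta>" by linarith
qed

lemma filterlim_at_right_zero_rescale:
  fixes c :: real
  assumes "c > 0"
  shows "filterlim (\<lambda>\<epsilon>. c * \<epsilon>) (at_right 0) (at_right 0)"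
  unfolding filterlim_iff
proof safe
  fix P assume "eventually P (at_right (0::real))"
  then obtain b where "b > 0" and b: "\<And>y. y > 0 \<Longrightarrow> y < b \<Longrightarrow> P y"
    by (auto simp: eventually_at_right_field)
  have "P (c * \<epsilon>)" if "\<epsilon> > 0" "\<epsilon> < b / c" for \<epsilon>
    using that assms by (intro b) (auto simp: field_simps)
  then show "eventually (\<lambda>\<epsilon>. P (c * \<epsilon>)) (at_right 0)"
    using \<open>b > 0\<close> assms by (auto simp: eventually_at_right_field intro!: exI[of _ "b / c"])
qed

lemma limsup_tendsto_zeroD:
  fixes a :: "nat \<Rightarrow> real \<Rightarrow> real"
  assumes "((\<lambda>\<epsilon>. limsup (\<lambda>n. ereal (a n \<epsilon>))) \<longlongrightarrow> 0) (at_right 0)" and "e > 0"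
  shows "\<forall>\<^sub>F \<epsilon> in at_right 0. \<forall>\<^sub>F n in sequentially. a n \<epsilon> < e"
  using order_tendstoD(2)[OF assms(1), of "ereal e"] assms(2)
  by (auto elim!: eventually_mono dest: Limsup_lessD)

lemma limsup_tendsto_zeroI:
  fixes a :: "nat \<Rightarrow> real \<Rightarrow> real"
  assumes nonneg: "\<And>n \<epsilon>. \<epsilon> > 0 \<Longrightarrow> 0 \<le> a n \<epsilon>"
    and small: "\<And>e. e > 0 \<Longrightarrow> \<forall>\<^sub>F \<epsilon> in at_right 0. \<forall>\<^sub>F n in sequentially. a n \<epsilon> \<le> e"
  shows "((\<lambda>\<epsilon>. limsup (\<lambda>n. ereal (a n \<epsilon>))) \<longlongrightarrow> 0) (at_right 0)"
proof (rule order_tendstoI)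
  fix t :: ereal assume "t < 0"
  have "\<forall>\<^sub>F \<epsilon> in at_right 0. (\<epsilon>::real) > 0" by (rule eventually_at_right_less)
  then show "\<forall>\<^sub>F \<epsilon> in at_right 0. t < limsup (\<lambda>n. ereal (a n \<epsilon>))"
  proof (rule eventually_mono)
    fix \<epsilon> :: real assume "\<epsilon> > 0"
    then have "0 \<le> limsup (\<lambda>n. ereal (a n \<epsilon>))" by (intro le_Limsup) (auto simp: nonneg)
    with \<open>t < 0\<close> show "t < limsup (\<lambda>n. ereal (a n \<epsilon>))" by simp
  qed
next
  fix t :: ereal assume "t > 0"
  then obtain e :: real where "e > 0" and "ereal e < t"
  proof (cases t)
    case PInf
    then show ?thesis using that[of 1] by simp
  qed (use \<open>t > 0\<close> that in \<open>auto dest: dense\<close>)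
  show "\<forall>\<^sub>F \<epsilon> in at_right 0. limsup (\<lambda>n. ereal (a n \<epsilon>)) < t"
    using small[OF \<open>e > 0\<close>]
  proof (rule eventually_mono)
    fix \<epsilon> assume "\<forall>\<^sub>F n in sequentially. a n \<epsilon> \<le> e"
    then have "limsup (\<lambda>n. ereal (a n \<epsilon>)) \<le> ereal e" by (intro Limsup_bounded) auto
    with \<open>ereal e < t\<close> show "limsup (\<lambda>n. ereal (a n \<epsilon>)) < t" by order
  qed
qed

lemma limsup_tendsto_zero_rescale:
  fixes a :: "nat \<Rightarrow> real \<Rightarrow> real" and c :: real
  assumes "((\<lambda>\<epsilon>. limsup (\<lambda>n. ereal (a n \<epsilon>))) \<longlongrightarrow> 0) (at_right 0)" and "c > 0"
  shows "((\<lambda>\<epsilon>. limsup (\<lambda>n. ereal (a n (c * \<epsilon>)))) \<longlongrightarrow> 0) (at_right 0)"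
  using filterlim_compose[OF assms(1) filterlim_at_right_zero_rescale[OF assms(2)]] .

lemma limsup_tendsto_zero_max_add:
  fixes a b d :: "nat \<Rightarrow> real \<Rightarrow> real"
  assumes "\<And>n \<epsilon>. \<epsilon> > 0 \<Longrightarrow> 0 \<le> a n \<epsilon>" and "\<And>n \<epsilon>. \<epsilon> > 0 \<Longrightarrow> 0 \<le> d n \<epsilon>"
    and a: "((\<lambda>\<epsilon>. limsup (\<lambda>n. ereal (a n \<epsilon>))) \<longlongrightarrow> 0) (at_right 0)"
    and b: "((\<lambda>\<epsilon>. limsup (\<lambda>n. ereal (b n \<epsilon>))) \<longlongrightarrow> 0) (at_right 0)"
    and d: "((\<lambda>\<epsilon>. limsup (\<lambda>n. ereal (d n \<epsilon>))) \<longlongrightarrow> 0) (at_right 0)"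
  shows "((\<lambda>\<epsilon>. limsup (\<lambda>n. ereal (max (a n \<epsilon>) (b n \<epsilon>) + d n \<epsilon>))) \<longlongrightarrow> 0) (at_right 0)"
proof (rule limsup_tendsto_zeroI)
  show "0 \<le> max (a n \<epsilon>) (b n \<epsilon>) + d n \<epsilon>" if "\<epsilon> > 0" for n \<epsilon>
    using assms(1,2)[OF that] by (simp add: add_increasing le_max_iff_disj)
  fix e :: real assume "e > 0"
  then have "e / 2 > 0" by simp
  from limsup_tendsto_zeroD[OF a this] limsup_tendsto_zeroD[OF b this] limsup_tendsto_zeroD[OF d this]
  show "\<forall>\<^sub>F \<epsilon> in at_right 0. \<forall>\<^sub>F n in sequentially. max (a n \<epsilon>) (b n \<epsilon>) + d n \<epsilon> \<le> e"
  proof eventually_elim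
    case (elim \<epsilon>)
    from elim(1-3) show ?case by eventually_elim simp
  qed
qed

lemma asymp_additive_bowen_variation:
  fixes \<phi> :: "'a::metric_space \<Rightarrow> 'a"
  assumes compact: "compact (UNIV :: 'a set)" and GA: "asymp_additive \<phi> G"
  shows "((\<lambda>\<epsilon>. limsup (\<lambda>n. ereal (bowen_variation \<phi> n (G n) \<epsilon> / real n))) \<longlongrightarrow> 0) (at_right 0)"
proof (rule limsup_tendsto_zeroI)
  have G_bdd: "bounded (range (G n))" for n using GA by (simp add: asymp_additive_def)
  obtain Gk :: "nat \<Rightarrow> 'a \<Rightarrow> real" where Gk_cont: "\<And>k. continuous_on UNIV (Gk k)"
    and Gk_approx: "(\<lambda>k. limsup (\<lambda>n. ereal (sup_norm (\<lambda>x. G n x - birkhoff_sum \<phi> n (Gk k) x) / real n)))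
           \<longlonglongrightarrow> 0"
    using GA unfolding asymp_additive_def by blast
  show "0 \<le> bowen_variation \<phi> n (G n) \<epsilon> / real n" if "\<epsilon> > 0" for n \<epsilon>
    using bowen_variation_nonneg[OF G_bdd that] by simp
  fix e :: real assume "e > 0"
  obtain k where "limsup (\<lambda>n. ereal (sup_norm (\<lambda>x. G n x - birkhoff_sum \<phi> n (Gk k) x) / real n))
      < ereal (e / 4)"
    using order_tendstoD(2)[OF Gk_approx, of "ereal (e / 4)"] \<open>e > 0\<close>
    by (auto simp: eventually_sequentially)
  then have approx: "\<forall>\<^sub>F n in sequentially.
      sup_norm (\<lambda>x. G n x - birkhoff_sum \<phi> n (Gk k) x) / real n < e / 4"
    by (auto dest: Limsup_lessD)
  have Gk_bdd: "bounded (range (Gk k))"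
    by (intro compact_imp_bounded compact_continuous_image Gk_cont compact)
  obtain d where "d > 0" and d: "\<And>a b. dist a b < d \<Longrightarrow> \<bar>Gk k a - Gk k b\<bar> \<le> e / 2"
    using compact_uniformly_continuous[OF Gk_cont compact] \<open>e > 0\<close>
    unfolding uniformly_continuous_on_def dist_real_def
    by (metis UNIV_I half_gt_zero less_eq_real_def dist_commute)
  have "\<forall>\<^sub>F \<epsilon> in at_right 0. 0 < \<epsilon> \<and> \<epsilon> < d"
    using \<open>d > 0\<close> by (auto simp: eventually_at_right_field)
  then show "\<forall>\<^sub>F \<epsilon> in at_right 0. \<forall>\<^sub>F n in sequentially. bowen_variation \<phi> n (G n) \<epsilon> / real n \<le> e"
  proof (rule eventually_mono)
    fix \<epsilon> :: real assume \<epsilon>: "0 < \<epsilon> \<and> \<epsilon> < d"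
    show "\<forall>\<^sub>F n in sequentially. bowen_variation \<phi> n (G n) \<epsilon> / real n \<le> e"
      using approx eventually_ge_at_top[of 1]
    proof eventually_elim
      case (elim n)
      have "bowen_variation \<phi> n (G n) \<epsilon>
          \<le> 2 * sup_norm (\<lambda>x. G n x - birkhoff_sum \<phi> n (Gk k) x) + real n * (e / 2)"
        using \<epsilon> d by (intro bowen_variation_le_birkhoff_approx G_bdd Gk_bdd) auto
      also have "\<dots> \<le> real n * e"
        using elim by (simp add: field_simps)
      finally show ?case using elim by (simp add: field_simps)
    qed
  qed
qed

lemma ae_exists_in_open:
  assumes "sets P = sets borel" and "measure_support P = UNIV"
    and "open U" and "x \<in> U" and "AE y in P. Q y"
  shows "\<exists>y\<in>U. Q y"
proof (rule ccontr)
  assume "\<not> (\<exists>y\<in>U. Q y)"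
  with assms(5) have "AE y in P. y \<notin> U" by (auto elim: AE_mp)
  moreover have "U \<in> sets P" and "space P = UNIV"
    using assms(1,3) sets_eq_imp_space_eq[OF assms(1)] by auto
  ultimately have "emeasure P U = 0" by (simp add: AE_iff_measurable)
  moreover have "emeasure P U > 0"
    using assms(2-4) by (auto simp: measure_support_def)
  ultimately show False by simp
qed

lemma gibbs_bound_from_ae:
  fixes \<phi> :: "'a::metric_space \<Rightarrow> 'a" and f :: "'a \<Rightarrow> real"
  assumes "finite_measure P" and borel: "sets P = sets borel" and supp: "measure_support P = UNIV"
    and cont: "continuous_on UNIV \<phi>" and "\<epsilon> > 0" and "K\<^sub>1 \<ge> 1" and "K\<^sub>2 \<ge> 1"
    and lower: "AE y in P. exp (f y) / K\<^sub>1 \<le> measure P (bowen_ball \<phi> n y (\<epsilon> / 2))"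
    and upper: "AE y in P. measure P (bowen_ball \<phi> n y (2 * \<epsilon>)) \<le> K\<^sub>2 * exp (f y)"
    and var: "\<And>x y. y \<in> bowen_ball \<phi> n x (\<epsilon> / 2) \<Longrightarrow> \<bar>f x - f y\<bar> \<le> D"
  shows "1 \<le> max K\<^sub>1 K\<^sub>2 * exp D"
    and "exp (f x) / (max K\<^sub>1 K\<^sub>2 * exp D) \<le> measure P (bowen_ball \<phi> n x \<epsilon>)"
    and "measure P (bowen_ball \<phi> n x \<epsilon>) \<le> max K\<^sub>1 K\<^sub>2 * exp D * exp (f x)"
proof -
  interpret finite_measure P by fact
  have balls_sets: "bowen_ball \<phi> n z r \<in> sets P" for z r
    using borel open_bowen_ball[OF cont] by auto
  obtain y where y: "y \<in> bowen_ball \<phi> n x (\<epsilon> / 2)"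
    and y_lower: "exp (f y) / K\<^sub>1 \<le> measure P (bowen_ball \<phi> n y (\<epsilon> / 2))"
    and y_upper: "measure P (bowen_ball \<phi> n y (2 * \<epsilon>)) \<le> K\<^sub>2 * exp (f y)"
    using ae_exists_in_open[OF borel supp open_bowen_ball[OF cont] centre_in_bowen_ball[of "\<epsilon> / 2" x \<phi> n]
        AE_conjI[OF lower upper]] \<open>\<epsilon> > 0\<close> by auto
  have inner: "bowen_ball \<phi> n y (\<epsilon> / 2) \<subseteq> bowen_ball \<phi> n x \<epsilon>"
    using bowen_ball_triangle[OF y, of "\<epsilon> / 2"] by simp
  have outer: "bowen_ball \<phi> n x \<epsilon> \<subseteq> bowen_ball \<phi> n y (2 * \<epsilon>)"
    using bowen_ball_triangle[OF y[unfolded bowen_ball_commute], of \<epsilon>]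
      bowen_ball_mono[of "\<epsilon> + \<epsilon> / 2" "2 * \<epsilon>" \<phi> n y] \<open>\<epsilon> > 0\<close> by auto
  have fy: "f x - D \<le> f y" "f y \<le> f x + D" using var[OF y] by auto
  have "exp (f x - D) / max K\<^sub>1 K\<^sub>2 \<le> exp (f y) / K\<^sub>1"
    using fy \<open>K\<^sub>1 \<ge> 1\<close> by (intro frac_le) auto
  also have "\<dots> \<le> measure P (bowen_ball \<phi> n x \<epsilon>)"
    using y_lower finite_measure_mono[OF inner balls_sets] by linarith
  finally have "exp (f x - D) / max K\<^sub>1 K\<^sub>2 \<le> measure P (bowen_ball \<phi> n x \<epsilon>)" .
  moreover have "measure P (bowen_ball \<phi> n x \<epsilon>) \<le> K\<^sub>2 * exp (f y)"
    using y_upper finite_measure_mono[OF outer balls_sets] by linarith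
  moreover have "K\<^sub>2 * exp (f y) \<le> max K\<^sub>1 K\<^sub>2 * exp (f x + D)"
    using fy \<open>K\<^sub>2 \<ge> 1\<close> by (intro mult_mono) auto
  ultimately show "exp (f x) / (max K\<^sub>1 K\<^sub>2 * exp D) \<le> measure P (bowen_ball \<phi> n x \<epsilon>)"
    and "measure P (bowen_ball \<phi> n x \<epsilon>) \<le> max K\<^sub>1 K\<^sub>2 * exp D * exp (f x)"
    by (simp_all add: exp_diff exp_add ac_simps)
  have "0 \<le> D" using var[of x x] centre_in_bowen_ball[of "\<epsilon> / 2" x \<phi> n] \<open>\<epsilon> > 0\<close> by simp
  then show "1 \<le> max K\<^sub>1 K\<^sub>2 * exp D"
    using mult_mono[of 1 "max K\<^sub>1 K\<^sub>2" 1 "exp D"] \<open>K\<^sub>1 \<ge> 1\<close> by simp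
qed

lemma ln_max_mult_exp_div:
  fixes a b d :: real
  assumes "1 \<le> a" and "1 \<le> b"
  shows "ln (max a b * exp d) / real n = max (ln a / real n) (ln b / real n) + d / real n"
proof -
  have "ln (max a b) = max (ln a) (ln b)" using assms by (simp add: max_def)
  then show ?thesis using assms by (simp add: ln_mult max_divide_distrib_right add_divide_distrib)
qed

lemma limsup_ln_gibbs_constant_tendsto_zero:
  fixes K D :: "nat \<Rightarrow> real \<Rightarrow> real"
  assumes K_ge: "\<And>n \<epsilon>. n \<ge> 1 \<Longrightarrow> \<epsilon> > 0 \<Longrightarrow> 1 \<le> K n \<epsilon>"
    and D_nonneg: "\<And>n \<epsilon>. \<epsilon> > 0 \<Longrightarrow> 0 \<le> D n \<epsilon>"
    and K_rate: "((\<lambda>\<epsilon>. limsup (\<lambda>n. ereal (ln (K n \<epsilon>) / real n))) \<longlongrightarrow> 0) (at_right 0)"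
    and D_rate: "((\<lambda>\<epsilon>. limsup (\<lambda>n. ereal (D n \<epsilon> / real n))) \<longlongrightarrow> 0) (at_right 0)"
  shows "((\<lambda>\<epsilon>. limsup (\<lambda>n. ereal
           (ln (max (K n (\<epsilon> / 2)) (K n (2 * \<epsilon>)) * exp (D n (\<epsilon> / 2))) / real n))) \<longlongrightarrow> 0)
         (at_right 0)"
proof -
  have split: "ln (max (K n (\<epsilon> / 2)) (K n (2 * \<epsilon>)) * exp (D n (\<epsilon> / 2))) / real n
      = max (ln (K n (\<epsilon> / 2)) / real n) (ln (K n (2 * \<epsilon>)) / real n) + D n (\<epsilon> / 2) / real n"
    if "\<epsilon> > 0" for n \<epsilon>
  proof (cases "n = 0")
    case False
    then show ?thesis using K_ge[of n "\<epsilon> / 2"] K_ge[of n "2 * \<epsilon>"] that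
      by (intro ln_max_mult_exp_div) auto
  qed simp
  have ln_K_nonneg: "0 \<le> ln (K n \<epsilon>) / real n" if "\<epsilon> > 0" for n \<epsilon>
    using K_ge[OF _ that, of n] by (cases "n = 0") auto
  have "((\<lambda>\<epsilon>. limsup (\<lambda>n. ereal (max (ln (K n (\<epsilon> / 2)) / real n) (ln (K n (2 * \<epsilon>)) / real n)
      + D n (\<epsilon> / 2) / real n))) \<longlongrightarrow> 0) (at_right 0)"
    using limsup_tendsto_zero_rescale[OF K_rate, of "1 / 2"] limsup_tendsto_zero_rescale[OF K_rate, of 2]
      limsup_tendsto_zero_rescale[OF D_rate, of "1 / 2"]
    by (intro limsup_tendsto_zero_max_add) (auto intro!: divide_nonneg_nonneg simp: ln_K_nonneg D_nonneg)
  then show ?thesis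
    by (rule tendsto_cong[THEN iffD2, rotated])
      (auto simp: split eventually_at_right_field intro!: exI[of _ 1])
qed

theorem lemma4p3:
  fixes \<phi> :: "'a::metric_space \<Rightarrow> 'a"
    and G :: "nat \<Rightarrow> 'a \<Rightarrow> real"
    and P :: "'a measure"
  assumes compact_space: "compact (UNIV :: 'a set)"
    and cont: "continuous_on UNIV \<phi>"
    and GA: "asymp_additive \<phi> G"
    and prob: "prob_space P"
    and borelP: "sets P = sets borel"
    and supp: "measure_support P = UNIV"
    and gibbs_ae: "\<exists>K :: nat \<Rightarrow> real \<Rightarrow> real.
        (\<forall>n \<epsilon>. n \<ge> 1 \<and> \<epsilon> > 0 \<longrightarrow> K n \<epsilon> \<ge> 1 \<and>
           (AE x in P. exp (G n x - real n * pressure \<phi> G) / K n \<epsilon> \<le> measure P (bowen_ball \<phi> n x \<epsilon>) \<and>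
                measure P (bowen_ball \<phi> n x \<epsilon>) \<le> K n \<epsilon> * exp (G n x - real n * pressure \<phi> G))) \<and>
        ((\<lambda>\<epsilon>. limsup (\<lambda>n. ereal (ln (K n \<epsilon>) / real n))) \<longlongrightarrow> 0) (at_right 0)"
  shows "weak_gibbs \<phi> G P"
proof -
  interpret prob_space P by fact
  obtain K :: "nat \<Rightarrow> real \<Rightarrow> real" where
    K: "\<And>n \<epsilon>. n \<ge> 1 \<Longrightarrow> \<epsilon> > 0 \<Longrightarrow> K n \<epsilon> \<ge> 1 \<and>
           (AE x in P. exp (G n x - real n * pressure \<phi> G) / K n \<epsilon> \<le> measure P (bowen_ball \<phi> n x \<epsilon>) \<and>
                measure P (bowen_ball \<phi> n x \<epsilon>) \<le> K n \<epsilon> * exp (G n x - real n * pressure \<phi> G))"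
    and K_rate: "((\<lambda>\<epsilon>. limsup (\<lambda>n. ereal (ln (K n \<epsilon>) / real n))) \<longlongrightarrow> 0) (at_right 0)"
    using gibbs_ae by blast
  define D where "D n \<epsilon> = bowen_variation \<phi> n (G n) \<epsilon>" for n \<epsilon>
  have G_bdd: "bounded (range (G n))" for n using GA by (simp add: asymp_additive_def)
  have D_nonneg: "0 \<le> D n \<epsilon>" if "\<epsilon> > 0" for n \<epsilon>
    unfolding D_def using bowen_variation_nonneg[OF G_bdd that] .
  define K' where "K' n \<epsilon> = max (K n (\<epsilon> / 2)) (K n (2 * \<epsilon>)) * exp (D n (\<epsilon> / 2))" for n \<epsilon>
  have K_ge: "1 \<le> K n (\<epsilon> / 2)" "1 \<le> K n (2 * \<epsilon>)"
    and K_lower: "AE y in P. exp (G n y - real n * pressure \<phi> G) / K n (\<epsilon> / 2)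
             \<le> measure P (bowen_ball \<phi> n y (\<epsilon> / 2))"
    and K_upper: "AE y in P. measure P (bowen_ball \<phi> n y (2 * \<epsilon>))
             \<le> K n (2 * \<epsilon>) * exp (G n y - real n * pressure \<phi> G)"
    if "n \<ge> 1" "\<epsilon> > 0" for n \<epsilon>
    using K[OF that(1), of "\<epsilon> / 2"] K[OF that(1), of "2 * \<epsilon>"] that(2) by (auto elim: AE_mp)
  have var: "\<bar>(G n x - real n * pressure \<phi> G) - (G n y - real n * pressure \<phi> G)\<bar> \<le> D n (\<epsilon> / 2)"
    if "y \<in> bowen_ball \<phi> n x (\<epsilon> / 2)" for n \<epsilon> x y
    using abs_diff_le_bowen_variation[OF G_bdd that] by (simp add: D_def)
  have "1 \<le> K' n \<epsilon> \<and>
      (\<forall>x. exp (G n x - real n * pressure \<phi> G) / K' n \<epsilon> \<le> measure P (bowen_ball \<phi> n x \<epsilon>) \<and>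
           measure P (bowen_ball \<phi> n x \<epsilon>) \<le> K' n \<epsilon> * exp (G n x - real n * pressure \<phi> G))"
    if "n \<ge> 1" "\<epsilon> > 0" for n \<epsilon>
    unfolding K'_def
    using gibbs_bound_from_ae[OF finite_measure_axioms borelP supp cont that(2) K_ge[OF that]
        K_lower[OF that] K_upper[OF that] var]
    by simp
  moreover have "((\<lambda>\<epsilon>. limsup (\<lambda>n. ereal (ln (K' n \<epsilon>) / real n))) \<longlongrightarrow> 0) (at_right 0)"
    unfolding K'_def using K D_nonneg K_rate asymp_additive_bowen_variation[OF compact_space GA]
    by (intro limsup_ln_gibbs_constant_tendsto_zero) (auto simp: D_def)
  ultimately show ?thesis
    unfolding weak_gibbs_def using prob borelP by blast
qed

end
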